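(* Fix integers $n,d\ge 1$, constants $0<h_{min}<h_{max}$, any initial state $\mathcal{X}^{(0)}\in\mathbb{R}^{dn}$, an initial bandwidth $h_1\in[h_{min},h_{max}]$, and a non-negative sequence $(\nu_k)$ with $\nu_k\to 0$. Let $(\mathcal{X}^{(k)},h_k,i_k)$ be generated by the Doubly Stochastic Mean-Shift (DSMS) process described in the context. Then almost surely $$\nabla_{\mathbf{x}_{i_k}}L_{h_{k+1}}(\mathcal{X}^{(k)})\longrightarrow \mathbf{0}\quad\text{as }k\to\infty,$$ where $\nabla_{\mathbf{x}_i}L_h$ denotes the partial gradient of $L_h$ with respect to the block variable $\mathbf{x}_i\in\mathbb{R}^d$.
   Context: A profile function is a map $k:[0,\infty)\to\mathbb{R}_+$ that vanishes on $[1,\infty)$, is $C^1$, non-increasing and convex, with $k'(t)<0$ for all $t\in[0,1)$. The associated kernel on $\mathbb{R}^d$ is $K(\mathbf{u})=k(\|\mathbf{u}\|^2)$ and the weight function is $G(\mathbf{u})=-k'(\|\mathbf{u}\|^2)\ge 0$; $\|\cdot\|$ is the Euclidean norm. A state is $\mathcal{X}=[\mathbf{x}_1,\ldots,\mathbf{x}_n]\in\mathbb{R}^{dn}$ with $\mathbf{x}_i\in\mathbb{R}^d$. For $h>0$ define $L_h(\mathcal{X})=\sum_{1\le i\le j\le n}K\big((\mathbf{x}_i-\mathbf{x}_j)/h\big)$ and the mean-shift operator $$\mathcal{S}_h(x;\mathcal{X})=\frac{\sum_{i=1}^n G\big((x-\mathbf{x}_i)/h\big)\,\mathbf{x}_i}{\sum_{i=1}^n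 G\big((x-\mathbf{x}_i)/h\big)},\quad x\in\mathbb{R}^d.$$ DSMS process: given $\mathcal{X}^{(0)}$, $h_1\in[h_{min},h_{max}]$ and $(\nu_k)$, for $k=0,1,2,\ldots$: if $k\ge1$, set $\delta_k=\min\{\nu_k,\ (h_k/h_{min})^2-1,\ 1-(h_k/h_{max})^2\}$, draw $\alpha_k$ uniformly on $(1-\delta_k,1+\delta_k)$ (with $\alpha_k=1$ if $\delta_k=0$), and set $h_{k+1}=h_k/\sqrt{\alpha_k}$; draw an index $i_k$ uniformly from $\{1,\ldots,n\}$; then set $\mathbf{x}_{i_k}^{(k+1)}=\mathcal{S}_{h_{k+1}}(\mathbf{x}_{i_k}^{(k)};\mathcal{X}^{(k)})$ and $\mathbf{x}_j^{(k+1)}=\mathbf{x}_j^{(k)}$ for $j\ne i_k$. The indices $i_k$ are i.i.d., independent of all previous choices, and the sequences $(i_k)$ and $(h_k)$ are independent. *)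

theory Defs
  imports "HOL-Probability.Probability"
begin

definition is_profile :: "(real \<Rightarrow> real) \<Rightarrow> (real \<Rightarrow> real) \<Rightarrow> bool" where
  "is_profile k kp \<longleftrightarrow>
     (\<forall>t\<ge>0. k t \<ge> 0) \<and>
     (\<forall>t\<ge>1. k t = 0) \<and>
     (\<forall>t\<ge>0. (k has_real_derivative kp t) (at t within {0..})) \<and>
     continuous_on {0..} kp \<and>
     (\<forall>s t. 0 \<le> s \<longrightarrow> s \<le> t \<longrightarrow> k t \<le> k s) \<and>
     convex_on {0..} k \<and>
     (\<forall>t. 0 \<le> t \<longrightarrow> t < 1 \<longrightarrow> kp t < 0)"

definition Kern :: "(real \<Rightarrow> real) \<Rightarrow> 'a::real_normed_vector \<Rightarrow> real" where
  "Kern k u = k ((norm u)\<^sup>2)"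

definition Gw :: "(real \<Rightarrow> real) \<Rightarrow> 'a::real_normed_vector \<Rightarrow> real" where
  "Gw kp u = - kp ((norm u)\<^sup>2)"

definition Lh :: "(real \<Rightarrow> real) \<Rightarrow> nat \<Rightarrow> real \<Rightarrow> (nat \<Rightarrow> 'a::real_normed_vector) \<Rightarrow> real" where
  "Lh k n h X = (\<Sum>i<n. \<Sum>j\<in>{i..<n}. Kern k ((X i - X j) /\<^sub>R h))"

definition mean_shift :: "(real \<Rightarrow> real) \<Rightarrow> nat \<Rightarrow> real \<Rightarrow> (nat \<Rightarrow> 'a::real_normed_vector) \<Rightarrow> 'a \<Rightarrow> 'a" where
  "mean_shift kp n h X x =
     (\<Sum>i<n. Gw kp ((x - X i) /\<^sub>R h) *\<^sub>R X i) /\<^sub>R (\<Sum>i<n. Gw kp ((x - X i) /\<^sub>R h))"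

text \<open>dsms_h ... k = h_{k+1}. The uniform draw alpha_k on (1-delta_k,1+delta_k) is realised
  as 1 + delta_k (2 u_k - 1) with u_k uniform on (0,1).\<close>
fun dsms_h :: "real \<Rightarrow> real \<Rightarrow> (nat \<Rightarrow> real) \<Rightarrow> real \<Rightarrow> (nat \<Rightarrow> real) \<Rightarrow> nat \<Rightarrow> real" where
  "dsms_h hmin hmax nu h1 u 0 = h1"
| "dsms_h hmin hmax nu h1 u (Suc k) =
     (let h = dsms_h hmin hmax nu h1 u k;
          \<delta> = min (nu (Suc k)) (min ((h / hmin)\<^sup>2 - 1) (1 - (h / hmax)\<^sup>2));
          \<alpha> = 1 + \<delta> * (2 * u (Suc k) - 1)
      in h / sqrt \<alpha>)"

text \<open>dsms_X ... k = X^(k); step k uses bandwidth hs k = h_{k+1} and index idx k = i_k.\<close>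
fun dsms_X :: "(real \<Rightarrow> real) \<Rightarrow> nat \<Rightarrow> (nat \<Rightarrow> real) \<Rightarrow> (nat \<Rightarrow> nat) \<Rightarrow> (nat \<Rightarrow> 'a::real_normed_vector)
                 \<Rightarrow> nat \<Rightarrow> (nat \<Rightarrow> 'a)" where
  "dsms_X kp n hs idx X0 0 = X0"
| "dsms_X kp n hs idx X0 (Suc k) =
     (let Y = dsms_X kp n hs idx X0 k; i = idx k
      in Y(i := mean_shift kp n (hs k) Y (Y i)))"

end

theory Submission
  imports Defs
begin

(* Write A_k = L_{h_{k+1}}(X^(k)) and B_k = L_{h_{k+1}}(X^(k+1)) for the energy before and after
   the k-th mean-shift step. As the profile is convex, L lies above its tangent at the current
   state, and in the moved block this minorant is a concave quadratic maximised by the mean shift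
   x'. Hence B_k - A_k >= W |x' - x_i|^2 / h^2, while the block gradient equals
   (2 / h^2) W (x' - x_i) with 0 < W <= n |k'(0)|, so |grad|^2 <= C (B_k - A_k) uniformly for
   h in [hmin, hmax]. The bandwidth change costs nothing on average: alpha |-> L_{h / sqrt alpha}(X)
   is convex, E alpha = 1 and alpha_{k+1} is independent of the past, so by Jensen
   E A_{k+1} >= E B_k. Telescoping bounds the sum of E (B_k - A_k) by max L, hence B_k - A_k -> 0
   almost surely, and with it the gradient. *)

section \<open>Profile functions\<close>

lemma profile_above_tangent:
  assumes P: "is_profile k kp" and c: "0 \<le> c" and x: "0 \<le> x"
  shows "k c + kp c * (x - c) \<le> k x"
proof -
  have cv: "convex_on {0..} k" and D: "(k has_real_derivative kp c) (at c within {0..})"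
    using P c unfolding is_profile_def by auto
  consider "x = c" | "c \<in> interior {0..}" | "c < x"
    using c x by fastforce
  then show ?thesis
  proof cases
    case 2
    show ?thesis
      using convex_on_imp_above_tangent[OF cv _ 2 _ D, of x] x by simp
  next
    case 3
    \<comment> \<open>At c = 0 only the right derivative exists: compare it with the secant slopes of k.\<close>
    have "{c<..} \<subseteq> {0..}"
      using c by auto
    then have "((\<lambda>y. (k y - k c) / (y - c)) \<longlongrightarrow> kp c) (at_right c)"
      using tendsto_mono[OF at_le D[unfolded has_field_derivative_iff]] by blast
    moreover have "\<forall>\<^sub>F y in at_right c. (k y - k c) / (y - c) \<le> (k x - k c) / (x - c)"
      using eventually_at_right_real[OF 3]
    proof eventually_elim
      case (elim y)
      then have "(k c - k y) / (c - y) \<le> (k c - k x) / (c - x)"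
        using convex_on_slope_le(1)[OF cv, where x=c and t=y and y=x] c by simp
      then show ?case
        by (metis minus_diff_eq minus_divide_divide)
    qed
    ultimately have "kp c \<le> (k x - k c) / (x - c)"
      by (rule tendsto_upperbound) simp
    then show ?thesis
      using 3 by (simp add: field_simps)
  qed simp
qed

lemma profile_deriv_nonpos:
  assumes P: "is_profile k kp" and t: "0 \<le> t"
  shows "kp t \<le> 0"
  using profile_above_tangent[OF P t, of "t + 1"] P t unfolding is_profile_def by force

lemma profile_deriv_mono:
  assumes P: "is_profile k kp" and "0 \<le> s" "s \<le> t"
  shows "kp s \<le> kp t"
proof -
  have "(kp s - kp t) * (t - s) \<le> 0"
    using profile_above_tangent[OF P, of s t] profile_above_tangent[OF P, of t s] assms
    by (simp add: algebra_simps)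
  then show ?thesis
    using assms by (cases "s = t") (auto simp: mult_le_0_iff)
qed

lemma profile_bounds:
  assumes "is_profile k kp" and "0 \<le> t"
  shows "0 \<le> k t" and "k t \<le> k 0"
  using assms unfolding is_profile_def by auto

text \<open>Only the values on \<open>[0, \<infinity>)\<close> matter; \<open>max 0\<close> extends them continuously to \<open>\<real>\<close>.\<close>

lemma borel_measurable_profile:
  assumes P: "is_profile k kp"
  shows "(\<lambda>t. k (max 0 t)) \<in> borel_measurable borel"
    and "(\<lambda>t. kp (max 0 t)) \<in> borel_measurable borel"
proof -
  have "continuous_on {0..} k"
    using P unfolding is_profile_def continuous_on_eq_continuous_within
    by (metis DERIV_continuous atLeast_iff)
  moreover have "continuous_on {0..} kp"
    using P unfolding is_profile_def by blast
  ultimately have "continuous_on UNIV (\<lambda>t. k (max 0 t))" "continuous_on UNIV (\<lambda>t. kp (max 0 t))"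
    by (auto intro!: continuous_on_compose2[where f = "max 0"] continuous_intros)
  then show "(\<lambda>t. k (max 0 t)) \<in> borel_measurable borel" "(\<lambda>t. kp (max 0 t)) \<in> borel_measurable borel"
    by (auto intro: borel_measurable_continuous_onI)
qed

lemma convex_on_profile_scaled:
  assumes P: "is_profile k kp" and c: "0 \<le> c"
  shows "convex_on {0<..} (\<lambda>a. k (a * c))"
proof (rule convex_onI)
  fix t x y :: real
  assume "0 < t" "t < 1" "x \<in> {0<..}" "y \<in> {0<..}"
  moreover have "convex_on {0..} k"
    using P unfolding is_profile_def by blast
  ultimately have "k ((1 - t) * (x * c) + t * (y * c)) \<le> (1 - t) * k (x * c) + t * k (y * c)"
    using c convex_onD[of "{0..}" k t "x * c" "y * c"] by auto
  then show "k (((1 - t) *\<^sub>R x + t *\<^sub>R y) * c) \<le> (1 - t) * k (x * c) + t * k (y * c)"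
    by (simp add: algebra_simps)
qed simp

section \<open>The energy and its block gradient\<close>

lemma sum_upper_triangle:
  fixes s :: "nat \<Rightarrow> nat \<Rightarrow> 'a::field_char_0"
  assumes "\<And>a b. s a b = s b a"
  shows "(\<Sum>a<n. \<Sum>b\<in>{a..<n}. s a b) = ((\<Sum>a<n. \<Sum>b<n. s a b) + (\<Sum>a<n. s a a)) / 2"
proof (induction n)
  case (Suc n)
  have "(\<Sum>b<n. s n b) = (\<Sum>a<n. s a n)"
    using assms by simp
  then show ?case
    using Suc by (simp add: sum.distrib)
qed simp

lemma Kern_diff_commute: "Kern k ((u - v) /\<^sub>R h) = Kern k ((v - u) /\<^sub>R h)"
  unfolding Kern_def by (simp add: norm_minus_commute)

lemma Lh_symmetric:
  "Lh k n h X = ((\<Sum>a<n. \<Sum>b<n. Kern k ((X a - X b) /\<^sub>R h)) + real n * k 0) / 2"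
  unfolding Lh_def by (subst sum_upper_triangle[OF Kern_diff_commute]) (simp add: Kern_def)

lemma Lh_bounds:
  assumes P: "is_profile k kp"
  shows "0 \<le> Lh k n h X" and "Lh k n h X \<le> real n * real n * k 0"
proof -
  have K: "0 \<le> Kern k u" "Kern k u \<le> k 0" for u :: 'a
    using profile_bounds[OF P] by (auto simp: Kern_def)
  show "0 \<le> Lh k n h X"
    unfolding Lh_def using K by (intro sum_nonneg) auto
  have "Lh k n h X \<le> (\<Sum>a<n. \<Sum>b<n. k 0)"
    unfolding Lh_def using K by (intro sum_mono order.trans[OF sum_mono2 sum_mono]) auto
  then show "Lh k n h X \<le> real n * real n * k 0"
    by simp
qed

lemma Lh_fun_upd:
  assumes i: "i < n"
  shows "Lh k n h (X(i := y)) =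
    Lh k n h X + (\<Sum>b\<in>{..<n} - {i}. Kern k ((y - X b) /\<^sub>R h) - Kern k ((X i - X b) /\<^sub>R h))"
proof -
  define I where "I = {..<n} - {i}"
  have n: "{..<n} = insert i I" "finite I" "i \<notin> I"
    using i by (auto simp: I_def)
  have split: "(\<Sum>a<n. \<Sum>b<n. Kern k ((Z a - Z b) /\<^sub>R h)) = k 0
      + 2 * (\<Sum>b\<in>I. Kern k ((Z i - Z b) /\<^sub>R h)) + (\<Sum>a\<in>I. \<Sum>b\<in>I. Kern k ((Z a - Z b) /\<^sub>R h))"
    for Z :: "nat \<Rightarrow> 'a"
    unfolding n(1) using n(2,3)
    by (simp add: sum.distrib Kern_diff_commute[where v = "Z i"]) (simp add: Kern_def)
  have "(\<Sum>a\<in>I. \<Sum>b\<in>I. Kern k (((X(i := y)) a - (X(i := y)) b) /\<^sub>R h)) =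
      (\<Sum>a\<in>I. \<Sum>b\<in>I. Kern k ((X a - X b) /\<^sub>R h))"
    using n(3) by (intro sum.cong) auto
  moreover have "(\<Sum>b\<in>I. Kern k (((X(i := y)) i - (X(i := y)) b) /\<^sub>R h)) =
      (\<Sum>b\<in>I. Kern k ((y - X b) /\<^sub>R h))"
    using n(3) by (intro sum.cong) auto
  ultimately show ?thesis
    unfolding Lh_symmetric split by (simp add: I_def sum_subtractf field_simps)
qed

lemma GDERIV_Kern_shift:
  fixes x c :: "'a::real_inner"
  assumes P: "is_profile k kp"
  shows "GDERIV (\<lambda>y. Kern k ((y - c) /\<^sub>R h)) x :>
           (2 * kp ((norm ((x - c) /\<^sub>R h))\<^sup>2) / h\<^sup>2) *\<^sub>R (x - c)"
proof -
  let ?q = "\<lambda>y. ((y - c) /\<^sub>R h) \<bullet> ((y - c) /\<^sub>R h)"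
  have q: "(?q has_derivative (\<lambda>v. 2 / h\<^sup>2 * (v \<bullet> (x - c)))) (at x)"
    by (auto intro!: derivative_eq_intros simp: inner_commute power2_eq_square divide_inverse)
  have k: "(k has_derivative (*) (kp t)) (at t within {0..})" if "t \<in> {0..}" for t
    using P that unfolding is_profile_def by (auto intro: has_field_derivative_imp_has_derivative)
  have "((\<lambda>y. k (?q y)) has_derivative (\<lambda>v. kp (?q x) * (2 / h\<^sup>2 * (v \<bullet> (x - c))))) (at x)"
    by (rule has_derivative_in_compose2[OF k _ _ q]) (auto simp only: image_subset_iff inner_ge_zero atLeast_iff)
  then show ?thesis
    unfolding gderiv_def Kern_def power2_norm_eq_inner
    by (rule has_derivative_eq_rhs) (simp add: fun_eq_iff)
qed

definition block_grad ::
    "(real \<Rightarrow> real) \<Rightarrow> nat \<Rightarrow> real \<Rightarrow> (nat \<Rightarrow> 'a::real_inner) \<Rightarrow> nat \<Rightarrow> 'a" where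
  "block_grad kp n h X i =
     (\<Sum>j<n. (2 * kp ((norm ((X i - X j) /\<^sub>R h))\<^sup>2) / h\<^sup>2) *\<^sub>R (X i - X j))"

lemma Lh_block_gderiv:
  fixes X :: "nat \<Rightarrow> 'a::real_inner"
  assumes P: "is_profile k kp" and i: "i < n"
  shows "GDERIV (\<lambda>y. Lh k n h (X(i := y))) (X i) :> block_grad kp n h X i"
proof -
  define I where "I = {..<n} - {i}"
  have "GDERIV (\<lambda>y. \<Sum>b\<in>I. Kern k ((y - X b) /\<^sub>R h)) (X i) :>
          (\<Sum>b\<in>I. (2 * kp ((norm ((X i - X b) /\<^sub>R h))\<^sup>2) / h\<^sup>2) *\<^sub>R (X i - X b))"
    unfolding gderiv_def inner_sum_right
    by (intro has_derivative_sum GDERIV_Kern_shift[OF P, unfolded gderiv_def])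
  moreover have "block_grad kp n h X i =
      (\<Sum>b\<in>I. (2 * kp ((norm ((X i - X b) /\<^sub>R h))\<^sup>2) / h\<^sup>2) *\<^sub>R (X i - X b))"
    unfolding block_grad_def I_def using i by (subst sum.remove[of _ i]) auto
  ultimately have "GDERIV (\<lambda>y. (Lh k n h X - (\<Sum>b\<in>I. Kern k ((X i - X b) /\<^sub>R h)))
      + (\<Sum>b\<in>I. Kern k ((y - X b) /\<^sub>R h))) (X i) :> 0 + block_grad kp n h X i"
    by (intro GDERIV_add GDERIV_const) simp
  then show ?thesis
    unfolding Lh_fun_upd[OF i] I_def by (simp add: sum_subtractf algebra_simps)
qed

section \<open>The mean-shift step\<close>

lemma sum_weighted_sq_dist_centroid:
  fixes X :: "nat \<Rightarrow> 'a::real_inner"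
  assumes W: "(\<Sum>b<n. G b) \<noteq> 0" and x': "x' = (\<Sum>b<n. G b *\<^sub>R X b) /\<^sub>R (\<Sum>b<n. G b)"
  shows "(\<Sum>b<n. G b * ((norm (p - X b))\<^sup>2 - (norm (x' - X b))\<^sup>2)) = (\<Sum>b<n. G b) * (norm (p - x'))\<^sup>2"
proof -
  let ?W = "\<Sum>b<n. G b"
  have e: "(norm (p - X b))\<^sup>2 - (norm (x' - X b))\<^sup>2 = p \<bullet> p - x' \<bullet> x' - 2 * ((p - x') \<bullet> X b)" for b
    by (simp add: power2_norm_eq_inner inner_diff_left inner_diff_right inner_commute algebra_simps)
  have "(\<Sum>b<n. G b * ((norm (p - X b))\<^sup>2 - (norm (x' - X b))\<^sup>2))
      = (\<Sum>b<n. G b * (p \<bullet> p - x' \<bullet> x') - 2 * ((p - x') \<bullet> (G b *\<^sub>R X b)))"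
    by (simp add: e algebra_simps)
  also have "\<dots> = ?W * (p \<bullet> p - x' \<bullet> x') - 2 * ((p - x') \<bullet> (\<Sum>b<n. G b *\<^sub>R X b))"
    by (simp add: sum_subtractf sum_distrib_left sum_distrib_right inner_sum_right)
  also have "(\<Sum>b<n. G b *\<^sub>R X b) = ?W *\<^sub>R x'"
    using W x' by simp
  finally show ?thesis
    by (simp add: power2_norm_eq_inner inner_diff_left inner_diff_right inner_commute algebra_simps)
qed

definition mean_shift_weight ::
    "(real \<Rightarrow> real) \<Rightarrow> nat \<Rightarrow> real \<Rightarrow> (nat \<Rightarrow> 'a::real_normed_vector) \<Rightarrow> 'a \<Rightarrow> real" where
  "mean_shift_weight kp n h X x = (\<Sum>j<n. Gw kp ((x - X j) /\<^sub>R h))"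

lemma mean_shift_eq_weight:
  "mean_shift kp n h X x = (\<Sum>j<n. Gw kp ((x - X j) /\<^sub>R h) *\<^sub>R X j) /\<^sub>R mean_shift_weight kp n h X x"
  unfolding mean_shift_def mean_shift_weight_def ..

lemma mean_shift_weight_bounds:
  assumes P: "is_profile k kp" and i: "i < n"
  shows "0 < mean_shift_weight kp n h X (X i)" and "mean_shift_weight kp n h X (X i) \<le> real n * - kp 0"
proof -
  have G: "0 \<le> Gw kp u" "Gw kp u \<le> - kp 0" for u :: 'a
    using profile_deriv_nonpos[OF P] profile_deriv_mono[OF P] by (auto simp: Gw_def)
  have "0 < - kp 0"
    using P unfolding is_profile_def by auto
  then have "0 < Gw kp ((X i - X i) /\<^sub>R h)"
    by (simp add: Gw_def)
  also have "\<dots> \<le> mean_shift_weight kp n h X (X i)"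
    unfolding mean_shift_weight_def using i G(1) by (intro member_le_sum) auto
  finally show "0 < mean_shift_weight kp n h X (X i)" .
  show "mean_shift_weight kp n h X (X i) \<le> real n * - kp 0"
    unfolding mean_shift_weight_def
    using sum_mono[of "{..<n}" "\<lambda>j. Gw kp ((X i - X j) /\<^sub>R h)" "\<lambda>_. - kp 0"] G(2) by simp
qed

lemma block_grad_mean_shift:
  fixes X :: "nat \<Rightarrow> 'a::real_inner"
  assumes P: "is_profile k kp" and i: "i < n"
  shows "block_grad kp n h X i =
    (2 / h\<^sup>2 * mean_shift_weight kp n h X (X i)) *\<^sub>R (mean_shift kp n h X (X i) - X i)"
proof -
  define G where "G j = Gw kp ((X i - X j) /\<^sub>R h)" for j
  let ?W = "mean_shift_weight kp n h X (X i)"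
  have W: "?W = (\<Sum>j<n. G j)" and "?W \<noteq> 0"
    using mean_shift_weight_bounds(1)[OF P i, of h X] by (auto simp: G_def mean_shift_weight_def)
  then have sx: "(\<Sum>j<n. G j *\<^sub>R X j) = ?W *\<^sub>R mean_shift kp n h X (X i)"
    by (simp add: mean_shift_eq_weight G_def)
  have "block_grad kp n h X i = (2 / h\<^sup>2) *\<^sub>R (\<Sum>j<n. G j *\<^sub>R X j - G j *\<^sub>R X i)"
    unfolding block_grad_def scaleR_sum_right
    by (intro sum.cong) (simp_all add: G_def Gw_def algebra_simps)
  also have "\<dots> = (2 / h\<^sup>2) *\<^sub>R (?W *\<^sub>R mean_shift kp n h X (X i) - ?W *\<^sub>R X i)"
    by (simp add: sum_subtractf sx W flip: scaleR_sum_left)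
  finally show ?thesis
    by (simp add: scaleR_diff_right)
qed

lemma Lh_mean_shift_gain:
  fixes X :: "nat \<Rightarrow> 'a::real_inner" and h :: real
  assumes P: "is_profile k kp" and i: "i < n"
  defines "x' \<equiv> mean_shift kp n h X (X i)"
  shows "mean_shift_weight kp n h X (X i) * (norm (x' - X i))\<^sup>2 / h\<^sup>2
           \<le> Lh k n h (X(i := x')) - Lh k n h X"
proof -
  define G where "G j = Gw kp ((X i - X j) /\<^sub>R h)" for j
  define D where "D b = G b * ((norm (X i - X b))\<^sup>2 - (norm (x' - X b))\<^sup>2) / h\<^sup>2" for b
  have norm_div: "(norm (u /\<^sub>R h))\<^sup>2 = (norm u)\<^sup>2 / h\<^sup>2" for u :: 'a
    by (simp add: power_divide power_mult_distrib divide_inverse power_inverse)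
  have W: "mean_shift_weight kp n h X (X i) = (\<Sum>j<n. G j)" "(\<Sum>j<n. G j) \<noteq> 0"
    using mean_shift_weight_bounds(1)[OF P i, of h X] by (auto simp: G_def mean_shift_weight_def)
  have "x' = (\<Sum>b<n. G b *\<^sub>R X b) /\<^sub>R (\<Sum>b<n. G b)"
    unfolding x'_def mean_shift_def G_def ..
  then have "mean_shift_weight kp n h X (X i) * (norm (x' - X i))\<^sup>2 / h\<^sup>2 = (\<Sum>b<n. D b)"
    using sum_weighted_sq_dist_centroid[OF W(2), of x' X "X i"]
    by (simp add: W(1) D_def norm_minus_commute flip: sum_divide_distrib)
  also have "\<dots> = D i + (\<Sum>b\<in>{..<n} - {i}. D b)"
    using i by (subst sum.remove[of _ i]) auto
  also have "\<dots> \<le> (\<Sum>b\<in>{..<n} - {i}. D b)"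
    using profile_deriv_nonpos[OF P, of 0] by (simp add: D_def G_def Gw_def divide_nonpos_nonneg mult_nonpos_nonneg)
  also have "\<dots> \<le> (\<Sum>b\<in>{..<n} - {i}. Kern k ((x' - X b) /\<^sub>R h) - Kern k ((X i - X b) /\<^sub>R h))"
  proof (rule sum_mono)
    fix b
    show "D b \<le> Kern k ((x' - X b) /\<^sub>R h) - Kern k ((X i - X b) /\<^sub>R h)"
      using profile_above_tangent[OF P, of "(norm ((X i - X b) /\<^sub>R h))\<^sup>2" "(norm ((x' - X b) /\<^sub>R h))\<^sup>2"]
      unfolding D_def G_def Gw_def Kern_def norm_div by (simp add: algebra_simps diff_divide_distrib)
  qed
  also have "\<dots> = Lh k n h (X(i := x')) - Lh k n h X"
    unfolding Lh_fun_upd[OF i] by simp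
  finally show ?thesis .
qed

lemma block_grad_sq_le_mean_shift_gain:
  fixes X :: "nat \<Rightarrow> 'a::real_inner" and h :: real
  assumes P: "is_profile k kp" and i: "i < n"
  defines "gain \<equiv> Lh k n h (X(i := mean_shift kp n h X (X i))) - Lh k n h X"
  shows "0 \<le> gain" and "(norm (block_grad kp n h X i))\<^sup>2 \<le> 4 * real n * - kp 0 / h\<^sup>2 * gain"
proof -
  let ?W = "mean_shift_weight kp n h X (X i)"
  let ?d = "(norm (mean_shift kp n h X (X i) - X i))\<^sup>2"
  have g: "?W * ?d / h\<^sup>2 \<le> gain" and W: "0 < ?W" "?W \<le> real n * - kp 0"
    using Lh_mean_shift_gain[OF P i] mean_shift_weight_bounds[OF P i] by (auto simp: gain_def)
  then show "0 \<le> gain"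
    by (meson divide_nonneg_nonneg mult_nonneg_nonneg order.trans less_imp_le zero_le_power2)
  have "norm (block_grad kp n h X i) = 2 / h\<^sup>2 * ?W * norm (mean_shift kp n h X (X i) - X i)"
    unfolding block_grad_mean_shift[OF P i] using W by (simp add: abs_mult)
  then have "(norm (block_grad kp n h X i))\<^sup>2 = 4 * ?W / h\<^sup>2 * (?W * ?d / h\<^sup>2)"
    by (simp add: power_mult_distrib power2_eq_square)
  also have "\<dots> \<le> 4 * ?W / h\<^sup>2 * gain"
    using g W by (intro mult_left_mono) auto
  also have "\<dots> \<le> 4 * real n * - kp 0 / h\<^sup>2 * gain"
    using W \<open>0 \<le> gain\<close> by (intro mult_right_mono divide_right_mono) auto
  finally show "(norm (block_grad kp n h X i))\<^sup>2 \<le> 4 * real n * - kp 0 / h\<^sup>2 * gain" .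
qed

section \<open>Bandwidth updates\<close>

definition bw_delta :: "real \<Rightarrow> real \<Rightarrow> real \<Rightarrow> real \<Rightarrow> real" where
  "bw_delta hmin hmax \<nu> h = min \<nu> (min ((h / hmin)\<^sup>2 - 1) (1 - (h / hmax)\<^sup>2))"

lemma dsms_h_Suc:
  "dsms_h hmin hmax nu h1 u (Suc m) =
     dsms_h hmin hmax nu h1 u m /
       sqrt (1 + bw_delta hmin hmax (nu (Suc m)) (dsms_h hmin hmax nu h1 u m) * (2 * u (Suc m) - 1))"
  by (simp add: bw_delta_def Let_def)

lemma bw_delta_bounds:
  assumes "0 < hmin" "hmin \<le> h" "h \<le> hmax" "0 \<le> \<nu>" "\<bar>s\<bar> \<le> 1"
  shows "0 \<le> bw_delta hmin hmax \<nu> h" "bw_delta hmin hmax \<nu> h \<le> 1"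
    and "(h / hmax)\<^sup>2 \<le> 1 + bw_delta hmin hmax \<nu> h * s" "1 + bw_delta hmin hmax \<nu> h * s \<le> (h / hmin)\<^sup>2"
proof -
  let ?\<delta> = "bw_delta hmin hmax \<nu> h"
  have "1 \<le> (h / hmin)\<^sup>2" "(h / hmax)\<^sup>2 \<le> 1"
    using assms by (simp_all add: le_divide_eq one_le_power power_le_one)
  then show \<delta>0: "0 \<le> ?\<delta>"
    using assms by (simp add: bw_delta_def)
  moreover have "\<bar>?\<delta> * s\<bar> \<le> ?\<delta>"
    using \<delta>0 assms(5) by (simp add: abs_mult mult_left_le)
  moreover have "?\<delta> \<le> (h / hmin)\<^sup>2 - 1" "?\<delta> \<le> 1 - (h / hmax)\<^sup>2"
    by (simp_all add: bw_delta_def)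
  ultimately show "(h / hmax)\<^sup>2 \<le> 1 + ?\<delta> * s" "1 + ?\<delta> * s \<le> (h / hmin)\<^sup>2"
    by (simp_all add: abs_le_iff)
  show "?\<delta> \<le> 1"
    using \<open>?\<delta> \<le> 1 - (h / hmax)\<^sup>2\<close> zero_le_power2[of "h / hmax"] by linarith
qed

lemma bw_rescaled_range:
  assumes "0 < hmin" "hmin \<le> h" "h \<le> hmax" "0 \<le> \<nu>" "0 \<le> t" "t \<le> 1"
  defines "h' \<equiv> h / sqrt (1 + bw_delta hmin hmax \<nu> h * (2 * t - 1))"
  shows "hmin \<le> h'" "h' \<le> hmax"
proof -
  let ?\<alpha> = "1 + bw_delta hmin hmax \<nu> h * (2 * t - 1)"
  have h: "0 < h" "0 < hmax"
    using assms by auto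
  have lo: "h / hmax \<le> sqrt ?\<alpha>" and hi: "sqrt ?\<alpha> \<le> h / hmin"
    using bw_delta_bounds(3,4)[OF assms(1-4), of "2 * t - 1"] assms h
    by (auto intro: real_le_rsqrt real_le_lsqrt)
  moreover have "0 < sqrt ?\<alpha>"
    using h lo by (meson divide_pos_pos less_le_trans)
  ultimately show "hmin \<le> h'" "h' \<le> hmax"
    using h assms(1) unfolding h'_def by (simp_all add: pos_le_divide_eq pos_divide_le_eq mult.commute)
qed

lemma dsms_h_range:
  assumes "0 < hmin" "hmin \<le> h1" "h1 \<le> hmax" "\<And>j. 0 \<le> nu j"
    and "\<And>j. j \<le> m \<Longrightarrow> 0 \<le> u j \<and> u j \<le> 1"
  shows "hmin \<le> dsms_h hmin hmax nu h1 u m \<and> dsms_h hmin hmax nu h1 u m \<le> hmax"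
  using assms(5)
proof (induction m)
  case (Suc m)
  then show ?case
    unfolding dsms_h_Suc using bw_rescaled_range[OF assms(1) _ _ assms(4)] by simp
qed (use assms in simp)

section \<open>Measurability\<close>

lemma borel_measurable_Lh:
  fixes Y :: "'w \<Rightarrow> nat \<Rightarrow> 'a::euclidean_space"
  assumes P: "is_profile k kp"
    and [measurable]: "\<And>i. (\<lambda>\<omega>. Y \<omega> i) \<in> borel_measurable N" "hh \<in> borel_measurable N"
  shows "(\<lambda>\<omega>. Lh k n (hh \<omega>) (Y \<omega>)) \<in> borel_measurable N"
proof -
  note [measurable] = borel_measurable_profile(1)[OF P]
  have Kern: "Kern k u = (\<lambda>t. k (max 0 t)) ((norm u)\<^sup>2)" for u :: 'a
    by (simp add: Kern_def)
  show ?thesis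
    unfolding Lh_def Kern by measurable
qed

lemma borel_measurable_mean_shift:
  fixes Y :: "'w \<Rightarrow> nat \<Rightarrow> 'a::euclidean_space"
  assumes P: "is_profile k kp"
    and [measurable]: "\<And>i. (\<lambda>\<omega>. Y \<omega> i) \<in> borel_measurable N"
      "hh \<in> borel_measurable N" "x \<in> borel_measurable N"
  shows "(\<lambda>\<omega>. mean_shift kp n (hh \<omega>) (Y \<omega>) (x \<omega>)) \<in> borel_measurable N"
proof -
  note [measurable] = borel_measurable_profile(2)[OF P]
  have Gw: "Gw kp u = - (\<lambda>t. kp (max 0 t)) ((norm u)\<^sup>2)" for u :: 'a
    by (simp add: Gw_def)
  show ?thesis
    unfolding mean_shift_def Gw by measurable
qed

lemma borel_measurable_dsms_h:
  assumes "\<And>j. j \<le> m \<Longrightarrow> (\<lambda>\<omega>. u \<omega> j) \<in> borel_measurable N"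
  shows "(\<lambda>\<omega>. dsms_h hmin hmax nu h1 (u \<omega>) m) \<in> borel_measurable N"
  using assms
proof (induction m)
  case (Suc m)
  then have [measurable]: "(\<lambda>\<omega>. dsms_h hmin hmax nu h1 (u \<omega>) m) \<in> borel_measurable N"
      "(\<lambda>\<omega>. u \<omega> (Suc m)) \<in> borel_measurable N"
    by auto
  show ?case
    unfolding dsms_h_Suc bw_delta_def by measurable
qed simp

lemma borel_measurable_dsms_X:
  fixes X0 :: "nat \<Rightarrow> 'a::euclidean_space"
  assumes P: "is_profile k kp"
    and "\<And>j. j < m \<Longrightarrow> (\<lambda>\<omega>. hs \<omega> j) \<in> borel_measurable N"
    and "\<And>j. j < m \<Longrightarrow> (\<lambda>\<omega>. idx \<omega> j) \<in> measurable N (count_space UNIV)"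
  shows "(\<lambda>\<omega>. dsms_X kp n (hs \<omega>) (idx \<omega>) X0 m i) \<in> borel_measurable N"
  using assms(2,3)
proof (induction m arbitrary: i)
  case (Suc m)
  let ?Y = "\<lambda>\<omega>. dsms_X kp n (hs \<omega>) (idx \<omega>) X0 m"
  have [measurable]: "\<And>i. (\<lambda>\<omega>. ?Y \<omega> i) \<in> borel_measurable N"
      "(\<lambda>\<omega>. hs \<omega> m) \<in> borel_measurable N" "(\<lambda>\<omega>. idx \<omega> m) \<in> measurable N (count_space UNIV)"
    using Suc by auto
  have [measurable]: "(\<lambda>\<omega>. ?Y \<omega> (idx \<omega> m)) \<in> borel_measurable N"
    by (rule measurable_compose_countable) measurable
  have [measurable]: "(\<lambda>\<omega>. mean_shift kp n (hs \<omega> m) (?Y \<omega>) (?Y \<omega> (idx \<omega> m))) \<in> borel_measurable N"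
    by (rule borel_measurable_mean_shift[OF P]) measurable
  have "dsms_X kp n (hs \<omega>) (idx \<omega>) X0 (Suc m) i =
      (if idx \<omega> m = i then mean_shift kp n (hs \<omega> m) (?Y \<omega>) (?Y \<omega> (idx \<omega> m)) else ?Y \<omega> i)" for \<omega>
    by (simp add: Let_def)
  then show ?case
    by simp
qed simp

lemma dsms_h_cong:
  "(\<And>j. j \<le> m \<Longrightarrow> u j = u' j) \<Longrightarrow> dsms_h hmin hmax nu h1 u m = dsms_h hmin hmax nu h1 u' m"
  by (induction m) (auto simp: Let_def)

lemma dsms_X_cong:
  "(\<And>j. j < m \<Longrightarrow> hs j = hs' j \<and> idx j = idx' j) \<Longrightarrow>
     dsms_X kp n hs idx X0 m = dsms_X kp n hs' idx' X0 m"
  by (induction m) (auto simp: Let_def)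

section \<open>Averaging over the bandwidth draw\<close>

abbreviation uniform_01 :: "real measure" where
  "uniform_01 \<equiv> uniform_measure lborel {0<..<1}"

lemma prob_space_uniform_01: "prob_space uniform_01"
  by (rule prob_space_uniform_measure) auto

lemma AE_uniform_01: "AE t in uniform_01. 0 < t \<and> t < 1"
  by (rule AE_uniform_measureI) auto

lemma integral_uniform_01_id: "(\<integral>t. t \<partial>uniform_01) = 1 / 2"
proof -
  have "uniform_01 = density lborel (\<lambda>x. ennreal (indicator {0<..<1} x))"
    unfolding uniform_measure_def by (simp add: ennreal_indicator divide_ennreal_def)
  then have "(\<integral>t. t \<partial>uniform_01) = (\<integral>x. indicator {0<..<1} x *\<^sub>R x \<partial>lborel)"
    by (simp add: integral_density)
  also have "\<dots> = (\<integral>x. x ^ 1 * indicator {0..1} x \<partial>lborel)"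
    using AE_lborel_singleton[of 0] AE_lborel_singleton[of 1]
    by (intro integral_cong_AE) (auto elim!: eventually_mono simp: indicator_def)
  also have "\<dots> = 1 / 2"
    by (subst integral_power) auto
  finally show ?thesis .
qed

lemma convex_on_sum_functions:
  assumes "finite A" "convex S" "\<And>i. i \<in> A \<Longrightarrow> convex_on S (f i)"
  shows "convex_on S (\<lambda>x. \<Sum>i\<in>A. f i x)"
  using assms by (induction A rule: finite_induct) (auto intro: convex_on_add simp: convex_on_const)

lemma convex_on_cong: "(\<And>x. x \<in> S \<Longrightarrow> f x = g x) \<Longrightarrow> convex_on S f \<longleftrightarrow> convex_on S g"
  by (auto simp: convex_on_def convex_def)

text \<open>Rescaling the bandwidth by \<open>1 / sqrt \<alpha>\<close> multiplies every squared distance by \<open>\<alpha>\<close>,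
  so the energy is a sum of profiles of linear functions of \<open>\<alpha>\<close>.\<close>

lemma convex_on_Lh_rescaled:
  assumes P: "is_profile k kp"
  shows "convex_on {0<..} (\<lambda>\<alpha>. Lh k n (h / sqrt \<alpha>) X)"
proof -
  define c where "c a b = (norm ((X a - X b) /\<^sub>R h))\<^sup>2" for a b
  have "Lh k n (h / sqrt \<alpha>) X = (\<Sum>a<n. \<Sum>b\<in>{a..<n}. k (\<alpha> * c a b))" if "0 < \<alpha>" for \<alpha>
    using that unfolding Lh_def Kern_def c_def
    by (simp add: power_mult_distrib power_divide divide_inverse power_inverse mult_ac)
  moreover have "convex_on {0<..} (\<lambda>\<alpha>. \<Sum>a<n. \<Sum>b\<in>{a..<n}. k (\<alpha> * c a b))"
    by (intro convex_on_sum_functions convex_on_profile_scaled[OF P]) (auto simp: c_def)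
  ultimately show ?thesis
    by (subst convex_on_cong) auto
qed

lemma Lh_le_integral_rescaled:
  fixes X :: "nat \<Rightarrow> 'a::euclidean_space"
  assumes P: "is_profile k kp" and \<delta>: "\<bar>\<delta>\<bar> \<le> 1"
  shows "Lh k n h X \<le> (\<integral>t. Lh k n (h / sqrt (1 + \<delta> * (2 * t - 1))) X \<partial>uniform_01)"
proof -
  interpret U: prob_space uniform_01
    by (rule prob_space_uniform_01)
  define \<alpha> where "\<alpha> t = 1 + \<delta> * (2 * t - 1)" for t
  define q where "q a = Lh k n (h / sqrt a) X" for a
  have \<alpha>_pos: "AE t in uniform_01. \<alpha> t \<in> {0<..}"
    using AE_uniform_01
  proof eventually_elim
    case (elim t)
    have "\<bar>\<delta>\<bar> * \<bar>2 * t - 1\<bar> \<le> \<bar>2 * t - 1\<bar>" "\<bar>2 * t - 1\<bar> < 1"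
      using elim mult_right_mono[OF \<delta> abs_ge_zero] by auto
    then have "\<bar>\<delta> * (2 * t - 1)\<bar> < 1"
      by (simp add: abs_mult)
    then show ?case
      by (simp add: \<alpha>_def)
  qed
  have "AE t in uniform_01. norm t \<le> 1"
    using AE_uniform_01 by eventually_elim auto
  then have int_id: "integrable uniform_01 (\<lambda>t. t)"
    by (rule U.integrable_const_bound) simp
  then have "integrable uniform_01 \<alpha>"
    unfolding \<alpha>_def by simp
  moreover have "U.expectation \<alpha> = 1"
    using int_id integral_uniform_01_id unfolding \<alpha>_def by (simp add: algebra_simps)
  moreover have "integrable uniform_01 (\<lambda>t. q (\<alpha> t))"
    unfolding q_def
    by (intro U.integrable_const_bound[where B = "real n * real n * k 0"] AE_I2)
       (auto intro!: borel_measurable_Lh[OF P]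
         simp: \<alpha>_def abs_of_nonneg[OF Lh_bounds(1)[OF P]] Lh_bounds(2)[OF P])
  ultimately have "q 1 \<le> U.expectation (\<lambda>t. q (\<alpha> t))"
    using U.jensens_inequality[OF _ \<alpha>_pos _ _ convex_on_Lh_rescaled[OF P], of 0] by (simp add: q_def)
  then show ?thesis
    by (simp add: q_def \<alpha>_def)
qed

section \<open>Independence and almost sure convergence\<close>

lemma (in prob_space) integral_indep_var_pair:
  fixes f :: "'s \<times> 's \<Rightarrow> real"
  assumes ind: "indep_var S X T Y"
    and f[measurable]: "f \<in> borel_measurable (S \<Otimes>\<^sub>M T)" and bnd: "\<And>p. \<bar>f p\<bar> \<le> C"
  shows "integrable M (\<lambda>\<omega>. \<integral>\<omega>'. f (X \<omega>, Y \<omega>') \<partial>M)"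
    and "(\<integral>\<omega>. f (X \<omega>, Y \<omega>) \<partial>M) = (\<integral>\<omega>. (\<integral>\<omega>'. f (X \<omega>, Y \<omega>') \<partial>M) \<partial>M)"
proof -
  have [measurable]: "X \<in> measurable M S" "Y \<in> measurable M T"
    and joint: "distr M S X \<Otimes>\<^sub>M distr M T Y = distr M (S \<Otimes>\<^sub>M T) (\<lambda>\<omega>. (X \<omega>, Y \<omega>))"
    using ind unfolding indep_var_distribution_eq by auto
  interpret MX: prob_space "distr M S X"
    by (rule prob_space_distr) measurable
  interpret MY: prob_space "distr M T Y"
    by (rule prob_space_distr) measurable
  interpret XY: pair_prob_space "distr M S X" "distr M T Y" ..
  have "integrable M (\<lambda>\<omega>. f (X \<omega>, Y \<omega>))"
    by (rule integrable_const_bound[where B = C]) (simp_all add: bnd)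
  then have "integrable (distr M (S \<Otimes>\<^sub>M T) (\<lambda>\<omega>. (X \<omega>, Y \<omega>))) f"
    by (subst integrable_distr_eq) simp_all
  then have int: "integrable (distr M S X \<Otimes>\<^sub>M distr M T Y) f"
    unfolding joint .
  define g where "g x = (\<integral>y. f (x, y) \<partial>distr M T Y)" for x
  have g[measurable]: "g \<in> borel_measurable S" and "integrable (distr M S X) g"
    using XY.integrable_fst'[OF int] unfolding g_def by (auto dest: borel_measurable_integrable)
  then have "integrable M (\<lambda>\<omega>. g (X \<omega>))"
    by (subst (asm) integrable_distr_eq) simp_all
  moreover have inner: "g (X \<omega>) = (\<integral>\<omega>'. f (X \<omega>, Y \<omega>') \<partial>M)" if "\<omega> \<in> space M" for \<omega>
    unfolding g_def using measurable_space[OF \<open>X \<in> measurable M S\<close> that]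
    by (intro integral_distr) (auto intro: measurable_compose[OF measurable_Pair2' f])
  ultimately show "integrable M (\<lambda>\<omega>. \<integral>\<omega>'. f (X \<omega>, Y \<omega>') \<partial>M)"
    by (simp cong: Bochner_Integration.integrable_cong)
  have "(\<integral>\<omega>. f (X \<omega>, Y \<omega>) \<partial>M) = integral\<^sup>L (distr M S X \<Otimes>\<^sub>M distr M T Y) f"
    unfolding joint by (rule integral_distr[symmetric]) measurable
  also have "\<dots> = (\<integral>x. g x \<partial>distr M S X)"
    unfolding g_def by (rule XY.integral_fst'[OF int, symmetric])
  also have "\<dots> = (\<integral>\<omega>. (\<integral>\<omega>'. f (X \<omega>, Y \<omega>') \<partial>M) \<partial>M)"
    by (simp add: integral_distr inner cong: Bochner_Integration.integral_cong)
  finally show "(\<integral>\<omega>. f (X \<omega>, Y \<omega>) \<partial>M) = (\<integral>\<omega>. (\<integral>\<omega>'. f (X \<omega>, Y \<omega>') \<partial>M) \<partial>M)" .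
qed

lemma AE_tendsto_zero_if_summable_integral:
  fixes D :: "nat \<Rightarrow> 'a \<Rightarrow> real"
  assumes [measurable]: "\<And>m. D m \<in> borel_measurable M"
    and nonneg: "\<And>m. AE \<omega> in M. 0 \<le> D m \<omega>" and int: "\<And>m. integrable M (D m)"
    and summable: "summable (\<lambda>m. \<integral>\<omega>. D m \<omega> \<partial>M)"
  shows "AE \<omega> in M. (\<lambda>m. D m \<omega>) \<longlonglongrightarrow> 0"
proof -
  have nonneg_all: "AE \<omega> in M. \<forall>m. 0 \<le> D m \<omega>"
    using nonneg by (simp add: AE_all_countable)
  have "(\<integral>\<^sup>+\<omega>. ennreal (D m \<omega>) \<partial>M) = ennreal (\<integral>\<omega>. D m \<omega> \<partial>M)" for m
    using nonneg by (rule nn_integral_eq_integral[OF int])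
  then have "(\<integral>\<^sup>+\<omega>. (\<Sum>m. ennreal (D m \<omega>)) \<partial>M) = ennreal (\<Sum>m. \<integral>\<omega>. D m \<omega> \<partial>M)"
    using nonneg summable
    by (simp add: nn_integral_suminf suminf_ennreal2 integral_nonneg_AE)
  then have "AE \<omega> in M. (\<Sum>m. ennreal (D m \<omega>)) \<noteq> \<infinity>"
    by (intro nn_integral_PInf_AE) simp_all
  then show ?thesis
    using nonneg_all
  proof eventually_elim
    case (elim \<omega>)
    then have "summable (\<lambda>m. D m \<omega>)"
      by (intro summable_suminf_not_top) auto
    then show ?case
      by (rule summable_LIMSEQ_zero)
  qed
qed

section \<open>The DSMS process\<close>

locale dsms_process = prob_space M
  for M :: "'w measure"
    and V :: "nat \<Rightarrow> 'w \<Rightarrow> real \<times> nat"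
    and k kp :: "real \<Rightarrow> real"
    and n :: nat
    and hmin hmax h1 :: real
    and nu :: "nat \<Rightarrow> real"
    and X0 :: "nat \<Rightarrow> 'a::euclidean_space" +
  assumes profile: "is_profile k kp"
    and n_pos: "1 \<le> n"
    and hmin_pos: "0 < hmin" and hmin_le_h1: "hmin \<le> h1" and h1_le_hmax: "h1 \<le> hmax"
    and nu_nonneg: "\<And>j. 0 \<le> nu j"
    and V_measurable: "\<And>j. V j \<in> measurable M (borel \<Otimes>\<^sub>M count_space {..<n})"
    and V_distr: "\<And>j. distr M (borel \<Otimes>\<^sub>M count_space {..<n}) (V j)
                    = uniform_01 \<Otimes>\<^sub>M uniform_count_measure {..<n}"
    and V_indep: "indep_vars (\<lambda>_. borel \<Otimes>\<^sub>M count_space {..<n}) V UNIV"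
begin

abbreviation draw_space :: "(real \<times> nat) measure" where
  "draw_space \<equiv> borel \<Otimes>\<^sub>M count_space {..<n}"

definition hs_of :: "(nat \<Rightarrow> real \<times> nat) \<Rightarrow> nat \<Rightarrow> real" where
  "hs_of w = dsms_h hmin hmax nu h1 (\<lambda>j. fst (w j))"

definition Xs_of :: "(nat \<Rightarrow> real \<times> nat) \<Rightarrow> nat \<Rightarrow> nat \<Rightarrow> 'a" where
  "Xs_of w = dsms_X kp n (hs_of w) (\<lambda>j. snd (w j)) X0"

definition hs :: "'w \<Rightarrow> nat \<Rightarrow> real" where
  "hs \<omega> = hs_of (\<lambda>j. V j \<omega>)"

definition Xs :: "'w \<Rightarrow> nat \<Rightarrow> nat \<Rightarrow> 'a" where
  "Xs \<omega> = Xs_of (\<lambda>j. V j \<omega>)"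

definition L_before :: "nat \<Rightarrow> 'w \<Rightarrow> real" where
  "L_before m \<omega> = Lh k n (hs \<omega> m) (Xs \<omega> m)"

definition L_after :: "nat \<Rightarrow> 'w \<Rightarrow> real" where
  "L_after m \<omega> = Lh k n (hs \<omega> m) (Xs \<omega> (Suc m))"

lemma measurable_snd_draw: "snd \<in> measurable draw_space (count_space UNIV)"
  by (rule measurable_compose[OF measurable_snd]) simp

lemma measurable_V_fst [measurable]: "(\<lambda>\<omega>. fst (V j \<omega>)) \<in> borel_measurable M"
  using measurable_compose[OF V_measurable measurable_fst] by simp

lemma V_snd_less:
  assumes "\<omega> \<in> space M"
  shows "snd (V j \<omega>) < n"
  using measurable_space[OF V_measurable assms] by (auto simp: space_pair_measure mem_Times_iff)

lemma measurable_hs_of: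
  assumes "\<And>j. j \<le> m \<Longrightarrow> (\<lambda>x. w x j) \<in> measurable N draw_space"
  shows "(\<lambda>x. hs_of (w x) m) \<in> borel_measurable N"
  unfolding hs_of_def using assms by (intro borel_measurable_dsms_h) measurable

lemma measurable_Xs_of:
  assumes "\<And>j. j < m \<Longrightarrow> (\<lambda>x. w x j) \<in> measurable N draw_space"
  shows "(\<lambda>x. Xs_of (w x) m i) \<in> borel_measurable N"
  unfolding Xs_of_def using assms
  by (intro borel_measurable_dsms_X[OF profile] measurable_hs_of
      measurable_compose[OF _ measurable_snd_draw]) auto

lemma measurable_hs [measurable]: "(\<lambda>\<omega>. hs \<omega> m) \<in> borel_measurable M"
  unfolding hs_def by (intro measurable_hs_of V_measurable)

lemma measurable_Xs [measurable]: "(\<lambda>\<omega>. Xs \<omega> m i) \<in> borel_measurable M"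
  unfolding Xs_def by (intro measurable_Xs_of V_measurable)

lemma measurable_L [measurable]:
  "L_before m \<in> borel_measurable M" "L_after m \<in> borel_measurable M"
  unfolding L_before_def L_after_def by (auto intro!: borel_measurable_Lh[OF profile])

lemma integrable_L: "integrable M (L_before m)" "integrable M (L_after m)"
proof -
  have "\<bar>Lh k n h X\<bar> \<le> real n * real n * k 0" for h and X :: "nat \<Rightarrow> 'a"
    using Lh_bounds[OF profile, of n h X] by simp
  then show "integrable M (L_before m)" "integrable M (L_after m)"
    by (auto intro!: integrable_const_bound[where B = "real n * real n * k 0"]
        simp: L_before_def L_after_def)
qed

lemma distr_V_fst: "distr M borel (\<lambda>\<omega>. fst (V j \<omega>)) = uniform_01"
proof -
  interpret UC: prob_space "uniform_count_measure {..<n}"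
    using n_pos by (intro prob_space_uniform_count_measure) (auto simp: lessThan_empty_iff)
  have "distr M borel (\<lambda>\<omega>. fst (V j \<omega>)) = distr (distr M draw_space (V j)) borel fst"
    using distr_distr[OF measurable_fst V_measurable] by (simp add: comp_def)
  also have "\<dots> = distr (uniform_01 \<Otimes>\<^sub>M uniform_count_measure {..<n}) uniform_01 fst"
    unfolding V_distr by (rule distr_cong) (simp_all add: sets_uniform_measure)
  also have "\<dots> = uniform_01"
    by (rule UC.distr_pair_fst)
  finally show ?thesis .
qed

lemma AE_V_fst: "AE \<omega> in M. \<forall>j. 0 < fst (V j \<omega>) \<and> fst (V j \<omega>) < 1"
proof -
  have "AE \<omega> in M. 0 < fst (V j \<omega>) \<and> fst (V j \<omega>) < 1" for j
    using AE_uniform_01 unfolding distr_V_fst[symmetric, of j] by (rule AE_distrD[OF measurable_V_fst])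
  then show ?thesis
    by (simp add: AE_all_countable)
qed

lemma hs_range:
  assumes "\<forall>j. 0 < fst (V j \<omega>) \<and> fst (V j \<omega>) < 1"
  shows "hmin \<le> hs \<omega> m" "hs \<omega> m \<le> hmax"
  using dsms_h_range[OF hmin_pos hmin_le_h1 h1_le_hmax nu_nonneg, of m "\<lambda>j. fst (V j \<omega>)"] assms
  by (auto simp: hs_def hs_of_def less_imp_le)

lemma Xs_Suc:
  "Xs \<omega> (Suc m) = (Xs \<omega> m)(snd (V m \<omega>) := mean_shift kp n (hs \<omega> m) (Xs \<omega> m) (Xs \<omega> m (snd (V m \<omega>))))"
  by (simp add: Xs_def Xs_of_def hs_def Let_def)

lemma block_grad_sq_le_L_gain:
  assumes \<omega>: "\<omega> \<in> space M" "\<forall>j. 0 < fst (V j \<omega>) \<and> fst (V j \<omega>) < 1"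
  shows "0 \<le> L_after m \<omega> - L_before m \<omega>"
    and "(norm (block_grad kp n (hs \<omega> m) (Xs \<omega> m) (snd (V m \<omega>))))\<^sup>2
           \<le> 4 * real n * - kp 0 / hmin\<^sup>2 * (L_after m \<omega> - L_before m \<omega>)"
proof -
  note gain = block_grad_sq_le_mean_shift_gain[OF profile V_snd_less[OF \<omega>(1), of m],
      of "hs \<omega> m" "Xs \<omega> m", folded Xs_Suc L_before_def L_after_def]
  then show "0 \<le> L_after m \<omega> - L_before m \<omega>"
    by blast
  have "hmin\<^sup>2 \<le> (hs \<omega> m)\<^sup>2"
    using hs_range[OF \<omega>(2)] hmin_pos by (intro power_mono) auto
  moreover have "0 \<le> - kp 0"
    using profile_deriv_nonpos[OF profile, of 0] by simp
  ultimately have "4 * real n * - kp 0 / (hs \<omega> m)\<^sup>2 \<le> 4 * real n * - kp 0 / hmin\<^sup>2"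
    using hmin_pos by (intro divide_left_mono mult_pos_pos) (auto simp: mult_nonneg_nonpos)
  then show "(norm (block_grad kp n (hs \<omega> m) (Xs \<omega> m) (snd (V m \<omega>))))\<^sup>2
      \<le> 4 * real n * - kp 0 / hmin\<^sup>2 * (L_after m \<omega> - L_before m \<omega>)"
    using gain by (meson mult_right_mono order.trans)
qed

lemma hs_of_restrict: "j \<le> m \<Longrightarrow> hs_of (restrict w {..m}) j = hs_of w j"
  unfolding hs_of_def by (rule dsms_h_cong) auto

lemma Xs_of_restrict: "Xs_of (restrict w {..m}) (Suc m) = Xs_of w (Suc m)"
  unfolding Xs_of_def by (rule dsms_X_cong) (auto simp: hs_of_restrict)

text \<open>Clamping to \<open>[hmin, hmax]\<close> changes nothing on the almost sure event of \<open>AE_V_fst\<close>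
  and makes the Jensen step hold for every history.\<close>

definition bw_clamped :: "(nat \<Rightarrow> real \<times> nat) \<Rightarrow> nat \<Rightarrow> real" where
  "bw_clamped w m = max hmin (min hmax (hs_of w m))"

definition L_after_of :: "nat \<Rightarrow> (nat \<Rightarrow> real \<times> nat) \<Rightarrow> real" where
  "L_after_of m w = Lh k n (bw_clamped w m) (Xs_of w (Suc m))"

definition L_next_of :: "nat \<Rightarrow> (nat \<Rightarrow> real \<times> nat) \<Rightarrow> real \<Rightarrow> real" where
  "L_next_of m w t =
     Lh k n (bw_clamped w m / sqrt (1 + bw_delta hmin hmax (nu (Suc m)) (bw_clamped w m) * (2 * t - 1)))
       (Xs_of w (Suc m))"

lemma L_after_le_integral_L_next_of: "L_after_of m w \<le> (\<integral>t. L_next_of m w t \<partial>uniform_01)"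
proof -
  have "hmin \<le> bw_clamped w m" "bw_clamped w m \<le> hmax"
    using hmin_le_h1 h1_le_hmax by (auto simp: bw_clamped_def)
  then have "\<bar>bw_delta hmin hmax (nu (Suc m)) (bw_clamped w m)\<bar> \<le> 1"
    using bw_delta_bounds(1,2)[OF hmin_pos _ _ nu_nonneg, of _ _ 0] by auto
  then show ?thesis
    unfolding L_after_of_def L_next_of_def by (rule Lh_le_integral_rescaled[OF profile])
qed

lemma L_after_L_before_Suc_of_history:
  assumes "\<forall>j. 0 < fst (V j \<omega>) \<and> fst (V j \<omega>) < 1"
  shows "L_after m \<omega> = L_after_of m (restrict (\<lambda>j. V j \<omega>) {..m})"
    and "L_before (Suc m) \<omega> = L_next_of m (restrict (\<lambda>j. V j \<omega>) {..m}) (fst (V (Suc m) \<omega>))"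
  using hs_range[OF assms, of m]
  by (simp_all add: L_after_def L_before_def L_after_of_def L_next_of_def bw_clamped_def hs_def Xs_def
      hs_of_restrict Xs_of_restrict hs_of_def[of "\<lambda>j. V j \<omega>"] Let_def bw_delta_def)

lemma measurable_L_of:
  "L_after_of m \<in> borel_measurable (PiM {..m} (\<lambda>_. draw_space))"
  "(\<lambda>p. L_next_of m (fst p) (fst (snd p (Suc m))))
     \<in> borel_measurable (PiM {..m} (\<lambda>_. draw_space) \<Otimes>\<^sub>M PiM {Suc m} (\<lambda>_. draw_space))"
proof -
  have [measurable]: "(\<lambda>w. hs_of w m) \<in> borel_measurable (PiM {..m} (\<lambda>_. draw_space))"
    "(\<lambda>w. Xs_of w (Suc m) i) \<in> borel_measurable (PiM {..m} (\<lambda>_. draw_space))" for i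
    by (auto intro!: measurable_hs_of measurable_Xs_of measurable_component_singleton)
  have [measurable]: "(\<lambda>w. fst (w (Suc m))) \<in> borel_measurable (PiM {Suc m} (\<lambda>_. draw_space))"
    by measurable
  show "L_after_of m \<in> borel_measurable (PiM {..m} (\<lambda>_. draw_space))"
    "(\<lambda>p. L_next_of m (fst p) (fst (snd p (Suc m))))
       \<in> borel_measurable (PiM {..m} (\<lambda>_. draw_space) \<Otimes>\<^sub>M PiM {Suc m} (\<lambda>_. draw_space))"
    unfolding L_after_of_def L_next_of_def bw_clamped_def bw_delta_def
    by (auto intro!: borel_measurable_Lh[OF profile])
qed

text \<open>The draw of step \<open>m + 1\<close> is independent of the history up to step \<open>m\<close>, so the
  bandwidth rescaling can be averaged out first.\<close>

lemma integral_L_after_le_L_before_Suc: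
  "(\<integral>\<omega>. L_after m \<omega> \<partial>M) \<le> (\<integral>\<omega>. L_before (Suc m) \<omega> \<partial>M)"
proof -
  define past where "past \<omega> = restrict (\<lambda>j. V j \<omega>) {..m}" for \<omega>
  define draw where "draw \<omega> = restrict (\<lambda>j. V j \<omega>) {Suc m}" for \<omega>
  define f :: "(nat \<Rightarrow> real \<times> nat) \<times> (nat \<Rightarrow> real \<times> nat) \<Rightarrow> real"
    where "f p = L_next_of m (fst p) (fst (snd p (Suc m)))" for p
  have [measurable]: "past \<in> measurable M (PiM {..m} (\<lambda>_. draw_space))"
    "draw \<in> measurable M (PiM {Suc m} (\<lambda>_. draw_space))"
    unfolding past_def draw_def by (auto intro!: measurable_restrict V_measurable)
  note [measurable] = measurable_L_of[of m, folded f_def]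
  have indep: "indep_var (PiM {..m} (\<lambda>_. draw_space)) past (PiM {Suc m} (\<lambda>_. draw_space)) draw"
    unfolding past_def draw_def by (rule indep_var_restrict[OF V_indep]) auto
  have bounded: "\<bar>Lh k n h X\<bar> \<le> real n * real n * k 0" for h and X :: "nat \<Rightarrow> 'a"
    using Lh_bounds[OF profile, of n h X] by simp
  then have f_bounded: "\<bar>f p\<bar> \<le> real n * real n * k 0" for p
    unfolding f_def L_next_of_def .
  note integral_pair = integral_indep_var_pair[OF indep _ f_bounded]
  have "(\<integral>\<omega>. L_after m \<omega> \<partial>M) = (\<integral>\<omega>. L_after_of m (past \<omega>) \<partial>M)"
    by (rule integral_cong_AE; (measurable)?)
       (use AE_V_fst L_after_L_before_Suc_of_history(1) in \<open>auto elim!: eventually_mono simp: past_def\<close>)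
  also have "\<dots> \<le> (\<integral>\<omega>. (\<integral>\<omega>'. f (past \<omega>, draw \<omega>') \<partial>M) \<partial>M)"
  proof (rule integral_mono[OF _ integral_pair(1)])
    have "\<bar>L_after_of m w\<bar> \<le> real n * real n * k 0" for w
      unfolding L_after_of_def by (rule bounded)
    then show "integrable M (\<lambda>\<omega>. L_after_of m (past \<omega>))"
      by (intro integrable_const_bound[where B = "real n * real n * k 0"] AE_I2) simp_all
    have "L_after_of m w \<le> (\<integral>\<omega>'. f (w, draw \<omega>') \<partial>M)" for w
      using L_after_le_integral_L_next_of[of m w]
      unfolding distr_V_fst[symmetric, of "Suc m"] f_def draw_def L_next_of_def bw_delta_def
      by (subst (asm) integral_distr) (auto intro!: borel_measurable_Lh[OF profile])
    then show "L_after_of m (past \<omega>) \<le> (\<integral>\<omega>'. f (past \<omega>, draw \<omega>') \<partial>M)" for \<omega> .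
  qed simp
  also have "\<dots> = (\<integral>\<omega>. f (past \<omega>, draw \<omega>) \<partial>M)"
    by (rule integral_pair(2)[symmetric]) simp
  also have "\<dots> = (\<integral>\<omega>. L_before (Suc m) \<omega> \<partial>M)"
    by (rule integral_cong_AE; (measurable)?)
       (use AE_V_fst L_after_L_before_Suc_of_history(2) in \<open>auto elim!: eventually_mono simp: f_def past_def draw_def\<close>)
  finally show ?thesis .
qed

lemma AE_L_gain_nonneg: "AE \<omega> in M. \<forall>m. 0 \<le> L_after m \<omega> - L_before m \<omega>"
  using AE_V_fst AE_space by eventually_elim (blast intro: block_grad_sq_le_L_gain(1))

lemma summable_integral_L_gain: "summable (\<lambda>m. \<integral>\<omega>. L_after m \<omega> - L_before m \<omega> \<partial>M)"
proof (rule summableI_nonneg_bounded)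
  let ?E = "\<lambda>L. \<integral>\<omega>. L \<omega> \<partial>M"
  have gain_eq: "(\<integral>\<omega>. L_after m \<omega> - L_before m \<omega> \<partial>M) = ?E (L_after m) - ?E (L_before m)" for m
    by (rule Bochner_Integration.integral_diff[OF integrable_L(2,1)])
  show "0 \<le> (\<integral>\<omega>. L_after m \<omega> - L_before m \<omega> \<partial>M)" for m
    using AE_L_gain_nonneg by (intro integral_nonneg_AE) (auto elim!: eventually_mono)
  show "(\<Sum>m<N. \<integral>\<omega>. L_after m \<omega> - L_before m \<omega> \<partial>M) \<le> real n * real n * k 0" for N
  proof -
    have "(\<Sum>m<N. \<integral>\<omega>. L_after m \<omega> - L_before m \<omega> \<partial>M)
        \<le> (\<Sum>m<N. ?E (L_before (Suc m)) - ?E (L_before m))"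
      unfolding gain_eq by (intro sum_mono diff_right_mono integral_L_after_le_L_before_Suc)
    also have "\<dots> = ?E (L_before N) - ?E (L_before 0)"
      by (rule sum_lessThan_telescope)
    also have "\<dots> \<le> ?E (\<lambda>_. real n * real n * k 0) - 0"
      using Lh_bounds[OF profile]
      by (intro diff_mono integral_mono integral_nonneg_AE AE_I2 integrable_L) (auto simp: L_before_def)
    also have "\<dots> = real n * real n * k 0"
      by (simp add: prob_space)
    finally show ?thesis .
  qed
qed

lemma AE_L_gain_tendsto_zero: "AE \<omega> in M. (\<lambda>m. L_after m \<omega> - L_before m \<omega>) \<longlonglongrightarrow> 0"
  using AE_L_gain_nonneg
  by (intro AE_tendsto_zero_if_summable_integral summable_integral_L_gain
      Bochner_Integration.integrable_diff integrable_L)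
     (auto elim!: eventually_mono)

theorem AE_block_gderiv_tendsto_zero:
  "AE \<omega> in M. \<exists>g :: nat \<Rightarrow> 'a.
     (\<forall>j. GDERIV (\<lambda>y. Lh k n (hs \<omega> j) ((Xs \<omega> j)(snd (V j \<omega>) := y))) (Xs \<omega> j (snd (V j \<omega>))) :> g j)
     \<and> g \<longlonglongrightarrow> 0"
  using AE_V_fst AE_L_gain_tendsto_zero AE_space
proof eventually_elim
  case (elim \<omega>)
  define g where "g j = block_grad kp n (hs \<omega> j) (Xs \<omega> j) (snd (V j \<omega>))" for j
  let ?C = "4 * real n * - kp 0 / hmin\<^sup>2"
  have "norm (g j) \<le> sqrt (?C * (L_after j \<omega> - L_before j \<omega>))" for j
    unfolding g_def using block_grad_sq_le_L_gain(2)[OF elim(3,1)] by (rule real_le_rsqrt)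
  moreover have "(\<lambda>j. sqrt (?C * (L_after j \<omega> - L_before j \<omega>))) \<longlonglongrightarrow> 0"
    using tendsto_real_sqrt[OF tendsto_mult[OF tendsto_const elim(2)], of ?C]
    unfolding mult_zero_right real_sqrt_zero .
  ultimately have "g \<longlonglongrightarrow> 0"
    by (rule Lim_null_comparison[OF always_eventually[OF allI]])
  moreover have
    "GDERIV (\<lambda>y. Lh k n (hs \<omega> j) ((Xs \<omega> j)(snd (V j \<omega>) := y))) (Xs \<omega> j (snd (V j \<omega>))) :> g j" for j
    unfolding g_def using Lh_block_gderiv[OF profile V_snd_less[OF elim(3)]] .
  ultimately show ?case
    by blast
qed

end

theorem corollary1:
  fixes M :: "'w measure"
    and V :: "nat \<Rightarrow> 'w \<Rightarrow> real \<times> nat"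
    and k kp :: "real \<Rightarrow> real"
    and n :: nat
    and hmin hmax h1 :: real
    and nu :: "nat \<Rightarrow> real"
    and X0 :: "nat \<Rightarrow> 'a::euclidean_space"
  assumes "prob_space M"
    and "is_profile k kp"
    and "n \<ge> 1"
    and "0 < hmin" "hmin < hmax"
    and "hmin \<le> h1" "h1 \<le> hmax"
    and "\<And>j. nu j \<ge> 0" "nu \<longlonglongrightarrow> 0"
    and "\<And>j. V j \<in> measurable M (borel \<Otimes>\<^sub>M count_space {..<n})"
    and "\<And>j. distr M (borel \<Otimes>\<^sub>M count_space {..<n}) (V j)
               = uniform_measure lborel {0<..<1} \<Otimes>\<^sub>M uniform_count_measure {..<n}"
    and "prob_space.indep_vars M (\<lambda>_. borel \<Otimes>\<^sub>M count_space {..<n}) V UNIV"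
  shows "AE \<omega> in M.
           (let u = (\<lambda>j. fst (V j \<omega>)); idx = (\<lambda>j. snd (V j \<omega>));
                hs = dsms_h hmin hmax nu h1 u;
                Xs = dsms_X kp n hs idx X0
            in \<exists>g :: nat \<Rightarrow> 'a.
                 (\<forall>j. GDERIV (\<lambda>y. Lh k n (hs j) ((Xs j)(idx j := y))) (Xs j (idx j)) :> g j)
                 \<and> g \<longlonglongrightarrow> 0)"
proof -
  interpret dsms_process M V k kp n hmin hmax h1 nu X0
    using assms by (simp add: dsms_process_def dsms_process_axioms_def)
  show ?thesis
    using AE_block_gderiv_tendsto_zero unfolding hs_def Xs_def hs_of_def Xs_of_def Let_def .
qed

end
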